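(* Let $F$ be a field of characteristic $\neq 2,3$, $C$ a Cayley–Dickson algebra over $F$ and $\gamma_1,\gamma_2,\gamma_3 \in F\setminus\{0\}$. Then the Jordan algebra $H(C_3,*_\gamma)$ has no nonzero derivation $d$ such that every value $d(x)$ is invertible or zero; i.e. $H(C_3,*_\gamma)$ admits no derivation with invertible values.
   Context: $C$ carries its standard involution $c\mapsto \bar c$, with norm $n$ and trace $t$. $C_3$ is the algebra of $3\times3$ matrices over $C$; for $X\in C_3$, $\bar X^T$ denotes the matrix obtained by transposing and applying $\bar{\ }$ to every entry. With $\gamma = \mathrm{diag}(\gamma_1,\gamma_2,\gamma_3)$, the involution $*_\gamma$ is $X^{*_\gamma} = \gamma^{-1}\bar X^T\gamma$, and $H(C_3,*_\gamma)=\{X: X^{*_\gamma}=X\}$ with product $X\circ Y = \tfrac12(XY+YX)$, a simple exceptional Jordan algebra. An element $x$ of a unital Jordan algebra $J$ is invertible if there exists $y\in J$ with $xy=1$, $x^2y=x$. A derivation with invertible values of $J$ is a nonzero derivation $d$ of $J$ such that for every $x \in J$, $d(x)$ is either invertible or equal to $0$. *)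

theory Defs
  imports Main "HOL-Library.Numeral_Type"
begin

record ('a, 'b) cdalg =
  cadd  :: "'b \<Rightarrow> 'b \<Rightarrow> 'b"
  cneg  :: "'b \<Rightarrow> 'b"
  czero :: 'b
  cone  :: 'b
  cmul  :: "'b \<Rightarrow> 'b \<Rightarrow> 'b"
  cconj :: "'b \<Rightarrow> 'b"
  csmul :: "'a \<Rightarrow> 'b \<Rightarrow> 'b"

definition cd_base :: "('a::field, 'a) cdalg" where
  "cd_base = \<lparr> cadd = (+), cneg = uminus, czero = 0, cone = 1, cmul = (*),
              cconj = id, csmul = (*) \<rparr>"

text \<open>Cayley--Dickson doubling with parameter mu:
  (a,b)(c,d) = (ac + mu conj(d) b, da + b conj(c)),  conj(a,b) = (conj a, -b).\<close>
definition cd_double :: "'a \<Rightarrow> ('a, 'b) cdalg \<Rightarrow> ('a, 'b \<times> 'b) cdalg" where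
  "cd_double mu A = \<lparr>
     cadd = (\<lambda>(a,b) (c,d). (cadd A a c, cadd A b d)),
     cneg = (\<lambda>(a,b). (cneg A a, cneg A b)),
     czero = (czero A, czero A),
     cone = (cone A, czero A),
     cmul = (\<lambda>(a,b) (c,d). (cadd A (cmul A a c) (csmul A mu (cmul A (cconj A d) b)),
                            cadd A (cmul A d a) (cmul A b (cconj A c)))),
     cconj = (\<lambda>(a,b). (cconj A a, cneg A b)),
     csmul = (\<lambda>k (a,b). (csmul A k a, csmul A k b)) \<rparr>"

type_synonym 'a octo = "(('a \<times> 'a) \<times> ('a \<times> 'a)) \<times> (('a \<times> 'a) \<times> ('a \<times> 'a))"

definition cayley_dickson :: "'a::field \<Rightarrow> 'a \<Rightarrow> 'a \<Rightarrow> ('a, 'a octo) cdalg" where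
  "cayley_dickson mu1 mu2 mu3 = cd_double mu3 (cd_double mu2 (cd_double mu1 cd_base))"

type_synonym 'b mat3 = "3 \<Rightarrow> 3 \<Rightarrow> 'b"

definition madd :: "('a,'b) cdalg \<Rightarrow> 'b mat3 \<Rightarrow> 'b mat3 \<Rightarrow> 'b mat3" where
  "madd A X Y = (\<lambda>i j. cadd A (X i j) (Y i j))"

definition msmul :: "('a,'b) cdalg \<Rightarrow> 'a \<Rightarrow> 'b mat3 \<Rightarrow> 'b mat3" where
  "msmul A k X = (\<lambda>i j. csmul A k (X i j))"

definition mzero :: "('a,'b) cdalg \<Rightarrow> 'b mat3" where
  "mzero A = (\<lambda>i j. czero A)"

definition mone :: "('a,'b) cdalg \<Rightarrow> 'b mat3" where
  "mone A = (\<lambda>i j. if i = j then cone A else czero A)"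

definition mmul :: "('a,'b) cdalg \<Rightarrow> 'b mat3 \<Rightarrow> 'b mat3 \<Rightarrow> 'b mat3" where
  "mmul A X Y = (\<lambda>i j. cadd A (cadd A (cmul A (X i 0) (Y 0 j)) (cmul A (X i 1) (Y 1 j)))
                              (cmul A (X i 2) (Y 2 j)))"

definition mconjT :: "('a,'b) cdalg \<Rightarrow> 'b mat3 \<Rightarrow> 'b mat3" where
  "mconjT A X = (\<lambda>i j. cconj A (X j i))"

definition mdiag :: "('a,'b) cdalg \<Rightarrow> (3 \<Rightarrow> 'a) \<Rightarrow> 'b mat3" where
  "mdiag A g = (\<lambda>i j. if i = j then csmul A (g i) (cone A) else czero A)"

definition mstar :: "('a::field,'b) cdalg \<Rightarrow> (3 \<Rightarrow> 'a) \<Rightarrow> 'b mat3 \<Rightarrow> 'b mat3" where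
  "mstar A g X = mmul A (mmul A (mdiag A (\<lambda>i. inverse (g i))) (mconjT A X)) (mdiag A g)"

definition Hset :: "('a::field,'b) cdalg \<Rightarrow> (3 \<Rightarrow> 'a) \<Rightarrow> 'b mat3 set" where
  "Hset A g = {X. mstar A g X = X}"

definition jprod :: "('a::field,'b) cdalg \<Rightarrow> 'b mat3 \<Rightarrow> 'b mat3 \<Rightarrow> 'b mat3" where
  "jprod A X Y = msmul A (inverse 2) (madd A (mmul A X Y) (mmul A Y X))"

definition jinvertible :: "('a::field,'b) cdalg \<Rightarrow> (3 \<Rightarrow> 'a) \<Rightarrow> 'b mat3 \<Rightarrow> bool" where
  "jinvertible A g x \<longleftrightarrow>
     (\<exists>y \<in> Hset A g. jprod A x y = mone A \<and> jprod A (jprod A x x) y = x)"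

text \<open>An F-linear derivation of the Jordan algebra H(C_3,*_gamma)
  (only its values on H matter).\<close>
definition is_derivation :: "('a::field,'b) cdalg \<Rightarrow> (3 \<Rightarrow> 'a) \<Rightarrow> ('b mat3 \<Rightarrow> 'b mat3) \<Rightarrow> bool" where
  "is_derivation A g d \<longleftrightarrow>
     (\<forall>X \<in> Hset A g. d X \<in> Hset A g) \<and>
     (\<forall>X \<in> Hset A g. \<forall>Y \<in> Hset A g. d (madd A X Y) = madd A (d X) (d Y)) \<and>
     (\<forall>k. \<forall>X \<in> Hset A g. d (msmul A k X) = msmul A k (d X)) \<and>
     (\<forall>X \<in> Hset A g. \<forall>Y \<in> Hset A g.
         d (jprod A X Y) = madd A (jprod A (d X) Y) (jprod A X (d Y)))"

definition deriv_inv_values :: "('a::field,'b) cdalg \<Rightarrow> (3 \<Rightarrow> 'a) \<Rightarrow> ('b mat3 \<Rightarrow> 'b mat3) \<Rightarrow> bool" where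
  "deriv_inv_values A g d \<longleftrightarrow>
     is_derivation A g d \<and> (\<exists>X \<in> Hset A g. d X \<noteq> mzero A) \<and>
     (\<forall>X \<in> Hset A g. d X = mzero A \<or> jinvertible A g (d X))"

end

theory Submission
  imports Defs
begin

text \<open>Let \<open>E\<^sub>k\<close> be the diagonal idempotents. From \<open>E\<^sub>k \<circ> E\<^sub>k = E\<^sub>k\<close> one gets
  \<open>E\<^sub>k \<circ> d(E\<^sub>k) = d(E\<^sub>k)/2\<close>, so \<open>d(E\<^sub>k)\<close> lies in the Peirce 1/2-space of \<open>E\<^sub>k\<close>: the
  matrices supported off the diagonal in row and column \<open>k\<close>. No such matrix \<open>Z\<close> is
  invertible, because for every \<open>Y\<close> the real parts of the diagonal of \<open>Z \<circ> Y\<close> add up to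
  twice the \<open>(k,k)\<close> one, which rules out \<open>Z \<circ> Y = 1\<close>. Hence \<open>d(E\<^sub>k) = 0\<close>; then \<open>d\<close>
  maps each Peirce 1/2-space into itself, so it vanishes there as well, and these spaces
  together with the multiples of the \<open>E\<^sub>k\<close> span \<open>H(C\<^sub>3,*\<^sub>\<gamma>)\<close>.\<close>

lemma three_cases: fixes x :: 3 shows "x = 0 \<or> x = 1 \<or> x = 2"
proof (induct x)
  case (of_int z)
  then have "z = 0 \<or> z = 1 \<or> z = 2" by fastforce
  then show ?case by auto
qed

lemma all_3_iff: "(\<forall>i::3. P i) \<longleftrightarrow> P 0 \<and> P 1 \<and> P 2"
  by (metis three_cases)

lemma mat3_eq_iff: "(X::'b mat3) = Y \<longleftrightarrow> (\<forall>i j. X i j = Y i j)"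
  by (auto simp: fun_eq_iff)

lemma eq_neg_self_iff:
  fixes x :: "'a::field" assumes "(2::'a) \<noteq> 0" shows "x = - x \<longleftrightarrow> x = 0"
  using assms by (metis add.inverse_neutral mult_2 mult_eq_0_iff eq_neg_iff_add_eq_0)

lemma half_mult_double:
  fixes x :: "'a::field" assumes "(2::'a) \<noteq> 0" shows "1 / 2 * (x + x) = x"
  using assms by (simp add: mult_2[symmetric])

lemma two_neq_one: "(2::'a::ring_1) \<noteq> 1"
  by (metis one_add_one add_cancel_left_left zero_neq_one)

lemma three_neq_two: "(3::'a::ring_1) \<noteq> 2"
proof
  assume "(3::'a) = 2"
  then have "(2::'a) + 1 = 2 + 0"
    by (simp add: numeral_3_eq_3 numeral_2_eq_2 add_ac)
  then show False
    by (simp only: add_left_cancel one_neq_zero)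
qed

definition munit :: "('a, 'b) cdalg \<Rightarrow> 3 \<Rightarrow> 'b mat3" where
  "munit A k = (\<lambda>i j. if i = k \<and> j = k then cone A else czero A)"

definition peirce_half :: "('a, 'b) cdalg \<Rightarrow> 3 \<Rightarrow> 'b mat3 \<Rightarrow> bool" where
  "peirce_half A k Z \<longleftrightarrow> (\<forall>i j. (i = k \<longleftrightarrow> j = k) \<longrightarrow> Z i j = czero A)"

definition off_diag_part :: "('a, 'b) cdalg \<Rightarrow> 'b mat3 \<Rightarrow> 3 \<Rightarrow> 3 \<Rightarrow> 'b mat3" where
  "off_diag_part A X l m =
     (\<lambda>i j. if (i = l \<and> j = m) \<or> (i = m \<and> j = l) then X i j else czero A)"

text \<open>The coefficient of \<open>1\<close> in an element of the Cayley--Dickson algebra.\<close>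
definition cd_re :: "'a octo \<Rightarrow> 'a" where
  "cd_re a = fst (fst (fst a))"

lemmas cd_defs = cayley_dickson_def cd_double_def cd_base_def split_beta prod_eq_iff

context
  fixes m1 m2 m3 :: "'a::field"
begin

abbreviation "C \<equiv> cayley_dickson m1 m2 m3"

lemma cd_mul_smul_one_left [simp]: "cmul C (csmul C k (cone C)) a = csmul C k a"
  by (simp add: cd_defs)
lemma cd_mul_smul_one_right [simp]: "cmul C a (csmul C k (cone C)) = csmul C k a"
  by (simp add: cd_defs)
lemma cd_mul_one_left [simp]: "cmul C (cone C) a = a"
  by (simp add: cd_defs)
lemma cd_mul_one_right [simp]: "cmul C a (cone C) = a"
  by (simp add: cd_defs)
lemma cd_mul_zero_left [simp]: "cmul C (czero C) a = czero C"
  by (simp add: cd_defs)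
lemma cd_mul_zero_right [simp]: "cmul C a (czero C) = czero C"
  by (simp add: cd_defs)
lemma cd_add_zero_left [simp]: "cadd C (czero C) a = a"
  by (simp add: cd_defs)
lemma cd_add_zero_right [simp]: "cadd C a (czero C) = a"
  by (simp add: cd_defs)
lemma cd_smul_smul [simp]: "csmul C k (csmul C l a) = csmul C (k * l) a"
  by (simp add: cd_defs)
lemma cd_smul_zero [simp]: "csmul C k (czero C) = czero C"
  by (simp add: cd_defs)
lemma cd_smul_one [simp]: "csmul C 1 a = a"
  by (simp add: cd_defs)
lemma cd_conj_one [simp]: "cconj C (cone C) = cone C"
  by (simp add: cd_defs)
lemma cd_conj_zero [simp]: "cconj C (czero C) = czero C"
  by (simp add: cd_defs)
lemma cd_conj_conj [simp]: "cconj C (cconj C a) = a"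
  by (simp add: cd_defs)
lemma cd_conj_add: "cconj C (cadd C a b) = cadd C (cconj C a) (cconj C b)"
  by (simp add: cd_defs)
lemma cd_conj_smul: "cconj C (csmul C k a) = csmul C k (cconj C a)"
  by (simp add: cd_defs)
lemma cd_smul_add: "csmul C k (cadd C a b) = cadd C (csmul C k a) (csmul C k b)"
  by (simp add: cd_defs algebra_simps)
lemma cd_add_commute: "cadd C a b = cadd C b a"
  by (simp add: cd_defs algebra_simps)
lemma cd_smul_cancel: "k \<noteq> 0 \<Longrightarrow> csmul C k a = csmul C k b \<longleftrightarrow> a = b"
  by (simp add: cd_defs)
lemma cd_smul_eq_zero_iff: "k \<noteq> 0 \<Longrightarrow> csmul C k a = czero C \<longleftrightarrow> a = czero C"
  by (metis cd_smul_cancel cd_smul_zero)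
lemma cd_zero_eq_smul_iff: "k \<noteq> 0 \<Longrightarrow> czero C = csmul C k a \<longleftrightarrow> a = czero C"
  by (metis cd_smul_cancel cd_smul_zero)
lemma cd_add_self_eq_self_iff: "cadd C a a = a \<longleftrightarrow> a = czero C"
  by (simp add: cd_defs two_neq_one)
text \<open>Stated with \<open>1 / 2\<close>, the simp normal form of \<open>inverse 2\<close>.\<close>
lemma cd_half_double: "(2::'a) \<noteq> 0 \<Longrightarrow> csmul C (1 / 2) (cadd C a a) = a"
  by (simp add: cd_defs half_mult_double)

lemma cd_re_add [simp]: "cd_re (cadd C a b) = cd_re a + cd_re b"
  by (simp add: cd_defs cd_re_def)
lemma cd_re_smul [simp]: "cd_re (csmul C k a) = k * cd_re a"
  by (simp add: cd_defs cd_re_def)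
lemma cd_re_one [simp]: "cd_re (cone C) = 1"
  by (simp add: cd_defs cd_re_def)
lemma cd_re_mul_commute: "cd_re (cmul C a b) = cd_re (cmul C b a)"
  by (simp add: cd_defs cd_re_def algebra_simps)

lemma cd_conj_fixed_eq_scalar:
  assumes "(2::'a) \<noteq> 0" "cconj C a = a" shows "a = csmul C (cd_re a) (cone C)"
  using assms by (simp add: cd_defs cd_re_def eq_neg_self_iff)

lemma Hset_iff:
  "X \<in> Hset C g \<longleftrightarrow> (\<forall>i j. X i j = csmul C (g j * inverse (g i)) (cconj C (X j i)))"
proof -
  have mstar: "mstar C g X = (\<lambda>i j. csmul C (g j * inverse (g i)) (cconj C (X j i)))"
    unfolding mat3_eq_iff all_3_iff by (simp add: mstar_def mmul_def mdiag_def mconjT_def)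
  show ?thesis
    unfolding Hset_def mem_Collect_eq mstar fun_eq_iff by (rule iffI; metis)
qed

lemma madd_Hset:
  assumes "X \<in> Hset C g" "Y \<in> Hset C g" shows "madd C X Y \<in> Hset C g"
  unfolding Hset_iff
proof (intro allI)
  fix i j
  have X: "X i j = csmul C (g j * inverse (g i)) (cconj C (X j i))"
    and Y: "Y i j = csmul C (g j * inverse (g i)) (cconj C (Y j i))"
    using assms unfolding Hset_iff by blast+
  show "madd C X Y i j = csmul C (g j * inverse (g i)) (cconj C (madd C X Y j i))"
    unfolding madd_def by (subst X, subst Y) (simp add: cd_conj_add cd_smul_add)
qed

lemma msmul_Hset:
  assumes "X \<in> Hset C g" shows "msmul C r X \<in> Hset C g"
  unfolding Hset_iff
proof (intro allI)
  fix i j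
  have X: "X i j = csmul C (g j * inverse (g i)) (cconj C (X j i))"
    using assms unfolding Hset_iff by blast
  show "msmul C r X i j = csmul C (g j * inverse (g i)) (cconj C (msmul C r X j i))"
    unfolding msmul_def by (subst X) (simp add: cd_conj_smul mult_ac)
qed

lemma munit_Hset: "\<forall>i. g i \<noteq> 0 \<Longrightarrow> munit C k \<in> Hset C g"
  by (auto simp: Hset_iff munit_def)

lemma off_diag_part_Hset:
  assumes "X \<in> Hset C g" shows "off_diag_part C X l m \<in> Hset C g"
  unfolding Hset_iff
proof (intro allI)
  fix i j
  have X: "X i j = csmul C (g j * inverse (g i)) (cconj C (X j i))"
    using assms unfolding Hset_iff by blast
  show "off_diag_part C X l m i j
          = csmul C (g j * inverse (g i)) (cconj C (off_diag_part C X l m j i))"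
    unfolding off_diag_part_def by (subst X) auto
qed

lemma Hset_diag_eq_scalar:
  assumes "X \<in> Hset C g" "\<forall>i. g i \<noteq> 0" "(2::'a) \<noteq> 0"
  shows "X k k = csmul C (cd_re (X k k)) (cone C)"
proof -
  have "X k k = csmul C (g k * inverse (g k)) (cconj C (X k k))"
    using assms(1) unfolding Hset_iff by blast
  then have "X k k = cconj C (X k k)"
    using assms(2) by simp
  then show ?thesis
    using cd_conj_fixed_eq_scalar[OF assms(3)] by metis
qed

lemma Hset_decomposition:
  assumes "X \<in> Hset C g" "\<forall>i. g i \<noteq> 0" "(2::'a) \<noteq> 0"
  shows "X = madd C
               (madd C (madd C (msmul C (cd_re (X 0 0)) (munit C 0))
                               (msmul C (cd_re (X 1 1)) (munit C 1)))
                       (msmul C (cd_re (X 2 2)) (munit C 2)))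
               (madd C (madd C (off_diag_part C X 0 1) (off_diag_part C X 0 2))
                       (off_diag_part C X 1 2))"
  using Hset_diag_eq_scalar[OF assms, of 0, symmetric] Hset_diag_eq_scalar[OF assms, of 1, symmetric]
    Hset_diag_eq_scalar[OF assms, of 2, symmetric]
  by (simp add: mat3_eq_iff all_3_iff madd_def msmul_def munit_def off_diag_part_def)

lemma off_diag_part_peirce_half:
  "peirce_half C 0 (off_diag_part C X 0 1)"
  "peirce_half C 0 (off_diag_part C X 0 2)"
  "peirce_half C 1 (off_diag_part C X 1 2)"
  by (auto simp: peirce_half_def off_diag_part_def)

lemma jprod_commute: "jprod C X Y = jprod C Y X"
  by (simp add: jprod_def madd_def cd_add_commute)

lemma jprod_mzero: "jprod C (mzero C) X = mzero C"
  by (simp add: mat3_eq_iff jprod_def mzero_def msmul_def madd_def mmul_def)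

lemma madd_mzero: "madd C (mzero C) X = X" "madd C X (mzero C) = X"
  by (simp_all add: mat3_eq_iff mzero_def madd_def)

lemma msmul_mzero: "msmul C r (mzero C) = mzero C"
  by (simp add: mat3_eq_iff mzero_def msmul_def)

lemma msmul_half_eq_if_eq_madd_self:
  "(2::'a) \<noteq> 0 \<Longrightarrow> Z = madd C W W \<Longrightarrow> msmul C (inverse 2) Z = W"
  by (simp add: mat3_eq_iff madd_def msmul_def cd_half_double)

lemma munit_idempotent: "(2::'a) \<noteq> 0 \<Longrightarrow> jprod C (munit C k) (munit C k) = munit C k"
  using three_cases[of k]
  by (elim disjE; simp only: mat3_eq_iff all_3_iff;
      simp add: jprod_def msmul_def madd_def mmul_def munit_def cd_half_double)

lemma jprod_munit_eq_half_iff: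
  assumes "(2::'a) \<noteq> 0"
  shows "jprod C (munit C k) Z = msmul C (inverse 2) Z \<longleftrightarrow> peirce_half C k Z"
  using three_cases[of k] assms
  by (elim disjE; simp only: mat3_eq_iff all_3_iff peirce_half_def;
      simp add: jprod_def msmul_def madd_def mmul_def munit_def cd_smul_cancel
        cd_add_self_eq_self_iff cd_smul_eq_zero_iff cd_zero_eq_smul_iff)

lemma peirce_half_re_trace_jprod:
  assumes "peirce_half C k Z"
  shows "cd_re (jprod C Z Y 0 0) + cd_re (jprod C Z Y 1 1) + cd_re (jprod C Z Y 2 2)
           = 2 * cd_re (jprod C Z Y k k)"
proof -
  have zero: "Z i j = czero C" if "i = k \<longleftrightarrow> j = k" for i j
    using assms that unfolding peirce_half_def by blast
  show ?thesis
    using three_cases[of k]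
    by (elim disjE) (simp_all add: zero jprod_def msmul_def madd_def mmul_def cd_re_mul_commute
        algebra_simps)
qed

lemma peirce_half_not_jinvertible:
  assumes "peirce_half C k Z" shows "\<not> jinvertible C g Z"
proof
  assume "jinvertible C g Z"
  then obtain Y where "jprod C Z Y = mone C"
    unfolding jinvertible_def by blast
  then have "cd_re (jprod C Z Y i i) = 1" for i
    by (simp add: mone_def)
  then show False
    using peirce_half_re_trace_jprod[OF assms, of Y] three_neq_two[where 'a='a] by simp
qed

lemma derivation_munit_peirce_half:
  assumes d: "is_derivation C g d" and g: "\<forall>i. g i \<noteq> 0" and two: "(2::'a) \<noteq> 0"
  shows "peirce_half C k (d (munit C k))"
proof -
  let ?E = "munit C k"
  have E: "?E \<in> Hset C g"
    using munit_Hset g .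
  have "d ?E = d (jprod C ?E ?E)"
    using munit_idempotent[OF two] by simp
  also have "\<dots> = madd C (jprod C (d ?E) ?E) (jprod C ?E (d ?E))"
    using d E unfolding is_derivation_def by blast
  also have "\<dots> = madd C (jprod C ?E (d ?E)) (jprod C ?E (d ?E))"
    using jprod_commute by metis
  finally have "jprod C ?E (d ?E) = msmul C (inverse 2) (d ?E)"
    using msmul_half_eq_if_eq_madd_self[OF two] by metis
  then show ?thesis
    using jprod_munit_eq_half_iff[OF two] by blast
qed

lemma derivation_peirce_half:
  assumes d: "is_derivation C g d" and g: "\<forall>i. g i \<noteq> 0" and two: "(2::'a) \<noteq> 0"
    and dE: "d (munit C k) = mzero C" and Q: "Q \<in> Hset C g" "peirce_half C k Q"
  shows "peirce_half C k (d Q)"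
proof -
  have E: "munit C k \<in> Hset C g"
    using munit_Hset g .
  have "msmul C (inverse 2) (d Q) = d (msmul C (inverse 2) Q)"
    using d Q(1) unfolding is_derivation_def by simp
  also have "\<dots> = d (jprod C (munit C k) Q)"
    using jprod_munit_eq_half_iff[OF two] Q(2) by metis
  also have "\<dots> = madd C (jprod C (d (munit C k)) Q) (jprod C (munit C k) (d Q))"
    using d E Q(1) unfolding is_derivation_def by blast
  also have "\<dots> = jprod C (munit C k) (d Q)"
    by (simp add: dE jprod_mzero madd_mzero)
  finally show ?thesis
    using jprod_munit_eq_half_iff[OF two] by metis
qed

lemma derivation_vanishes_if_peirce_half_values_vanish:
  assumes d: "is_derivation C g d" and g: "\<forall>i. g i \<noteq> 0" and two: "(2::'a) \<noteq> 0"
    and vanish: "\<And>X k. X \<in> Hset C g \<Longrightarrow> peirce_half C k (d X) \<Longrightarrow> d X = mzero C"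
    and X: "X \<in> Hset C g"
  shows "d X = mzero C"
proof -
  let ?H = "Hset C g"
  have add: "\<And>X Y. X \<in> ?H \<Longrightarrow> Y \<in> ?H \<Longrightarrow> d (madd C X Y) = madd C (d X) (d Y)"
    and smul: "\<And>r X. X \<in> ?H \<Longrightarrow> d (msmul C r X) = msmul C r (d X)"
    using d unfolding is_derivation_def by blast+
  have dE: "d (munit C k) = mzero C" for k
    using vanish munit_Hset[OF g] derivation_munit_peirce_half[OF d g two] by blast
  have diag: "d (msmul C r (munit C k)) = mzero C" for r k
    using smul munit_Hset[OF g] dE msmul_mzero by simp
  have off_diag: "d Q = mzero C" if "Q \<in> ?H" "peirce_half C k Q" for Q k
    using vanish derivation_peirce_half[OF d g two dE] that by blast
  let ?D0 = "msmul C (cd_re (X 0 0)) (munit C 0)" and ?D1 = "msmul C (cd_re (X 1 1)) (munit C 1)"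
    and ?D2 = "msmul C (cd_re (X 2 2)) (munit C 2)"
    and ?Q1 = "off_diag_part C X 0 1" and ?Q2 = "off_diag_part C X 0 2"
    and ?Q3 = "off_diag_part C X 1 2"
  have H: "?D0 \<in> ?H" "?D1 \<in> ?H" "?D2 \<in> ?H" "?Q1 \<in> ?H" "?Q2 \<in> ?H" "?Q3 \<in> ?H"
    using msmul_Hset munit_Hset[OF g] off_diag_part_Hset X by blast+
  have "d ?D0 = mzero C" "d ?D1 = mzero C" "d ?D2 = mzero C"
    "d ?Q1 = mzero C" "d ?Q2 = mzero C" "d ?Q3 = mzero C"
    using diag off_diag H off_diag_part_peirce_half by blast+
  then have "d (madd C (madd C (madd C ?D0 ?D1) ?D2) (madd C (madd C ?Q1 ?Q2) ?Q3)) = mzero C"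
    using H madd_Hset add madd_mzero by simp
  then show ?thesis
    using Hset_decomposition[OF X g two] by simp
qed

end

theorem lemma6:
  fixes mu1 mu2 mu3 :: "'a::field" and gamma :: "3 \<Rightarrow> 'a"
  assumes "(2::'a) \<noteq> 0" and "(3::'a) \<noteq> 0"
    and "mu1 \<noteq> 0" and "mu2 \<noteq> 0" and "mu3 \<noteq> 0"
    and "\<forall>i. gamma i \<noteq> 0"
  shows "\<not> (\<exists>d. deriv_inv_values (cayley_dickson mu1 mu2 mu3) gamma d)"
proof
  let ?C = "cayley_dickson mu1 mu2 mu3" and ?H = "Hset (cayley_dickson mu1 mu2 mu3) gamma"
  assume "\<exists>d. deriv_inv_values ?C gamma d"
  then obtain d where d: "is_derivation ?C gamma d"
    and nonzero: "\<exists>X \<in> ?H. d X \<noteq> mzero ?C"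
    and inv_values: "\<forall>X \<in> ?H. d X = mzero ?C \<or> jinvertible ?C gamma (d X)"
    unfolding deriv_inv_values_def by blast
  have "d X = mzero ?C" if "X \<in> ?H" for X
    using derivation_vanishes_if_peirce_half_values_vanish[OF d assms(6) assms(1) _ that]
      inv_values peirce_half_not_jinvertible by blast
  with nonzero show False
    by blast
qed

end
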